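(* Let $[L_1],[L_2],[L_3]\in\mathfrak B_3^0$ be distinct, and suppose the lines between $[L_1]$ and $[L_2]$ and between $[L_1]$ and $[L_3]$ are both unbent. Then either the three classes lie in a single apartment, or there exist a basis $e_1,e_2,e_3$ of $L_1$ and integers $t,s,u$ with $0<t<s$ and $t<u$ such that, after possibly exchanging $[L_2]$ and $[L_3]$, the classes $[L_2],[L_3]$ have representatives of one of the following forms: (i) $L_2=R\{e_1,\pi^se_2,\pi^se_3\}$ and $L_3=R\{e_1+\pi^te_2,\pi^ue_2,\pi^ue_3\}$; (ii) $L_2=R\{e_1,\pi^se_2,\pi^se_3\}$ and $L_3=R\{e_1+\pi^te_3,e_2,\pi^ue_3\}$; (iii) $L_2=R\{e_1,e_2,\pi^se_3\}$ and $L_3=R\{e_1+\pi^te_3,e_2,\pi^ue_3\}$. Here $R\{f_1,f_2,f_3\}$ denotes the $R$-span of $f_1,f_2,f_3$.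
   Context: Let $K$ be a field with a discrete valuation $v\colon K^*\to\mathbb Z$, valuation ring $R$, residue field $k$ and uniformizer $\pi$. Let $V$ be a $3$-dimensional $K$-vector space. A lattice is an $R$-submodule of $V$ free of rank $3$; $\mathfrak B_3^0$ is the set of homothety classes $[L]=\{\alpha L:\alpha\in K^*\}$ of lattices. A set of classes lies in a single apartment if there is a basis $f_1,f_2,f_3$ of $V$ such that every class in the set is represented by a lattice $\pi^{m_1}Rf_1+\pi^{m_2}Rf_2+\pi^{m_3}Rf_3$ with $m_i\in\mathbb Z$. For distinct $[L],[M]\in\mathfrak B_3^0$ choose (by the elementary divisor theorem) a basis $e_1,e_2,e_3$ of $V$ and integers $m_1\le m_2\le m_3$ with $L=Re_1+Re_2+Re_3$, $M=\pi^{m_1}Re_1+\pi^{m_2}Re_2+\pi^{m_3}Re_3$; the line between $[L]$ and $[M]$ is bent if $m_1<m_2<m_3$ and unbent otherwise. *)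

theory Defs
  imports "HOL-Analysis.Finite_Cartesian_Product"
begin

text \<open>The 3-dimensional K-vector space V is modelled as K^3 = 'a^3.
  The valuation is v restricted to nonzero elements.\<close>

definition discrete_valuation :: "('a::field \<Rightarrow> int) \<Rightarrow> bool" where
  "discrete_valuation v \<longleftrightarrow>
     (\<forall>x y. x \<noteq> 0 \<longrightarrow> y \<noteq> 0 \<longrightarrow> v (x * y) = v x + v y) \<and>
     (\<forall>x y. x \<noteq> 0 \<longrightarrow> y \<noteq> 0 \<longrightarrow> x + y \<noteq> 0 \<longrightarrow> min (v x) (v y) \<le> v (x + y)) \<and>
     (\<forall>n. \<exists>x. x \<noteq> 0 \<and> v x = n)"

definition valring :: "('a::field \<Rightarrow> int) \<Rightarrow> 'a set" where
  "valring v = {x. x = 0 \<or> 0 \<le> v x}"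

definition sm :: "'a::field \<Rightarrow> 'a^3 \<Rightarrow> 'a^3" where
  "sm c x = (\<chi> i. c * x $ i)"

definition lincomb :: "'a::field \<Rightarrow> 'a \<Rightarrow> 'a \<Rightarrow> 'a^3 \<Rightarrow> 'a^3 \<Rightarrow> 'a^3 \<Rightarrow> 'a^3" where
  "lincomb a b c f1 f2 f3 = sm a f1 + sm b f2 + sm c f3"

definition kbasis :: "'a::field^3 \<Rightarrow> 'a^3 \<Rightarrow> 'a^3 \<Rightarrow> bool" where
  "kbasis f1 f2 f3 \<longleftrightarrow> (\<forall>x. \<exists>a b c. x = lincomb a b c f1 f2 f3) \<and>
     (\<forall>a b c. lincomb a b c f1 f2 f3 = 0 \<longrightarrow> a = 0 \<and> b = 0 \<and> c = 0)"

definition Rspan :: "('a::field \<Rightarrow> int) \<Rightarrow> 'a^3 \<Rightarrow> 'a^3 \<Rightarrow> 'a^3 \<Rightarrow> ('a^3) set" where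
  "Rspan v f1 f2 f3 = {lincomb a b c f1 f2 f3 | a b c.
      a \<in> valring v \<and> b \<in> valring v \<and> c \<in> valring v}"

text \<open>A lattice: R-submodule free of rank 3, i.e. the R-span of an R-basis, which is a K-basis.\<close>
definition is_lattice :: "('a::field \<Rightarrow> int) \<Rightarrow> ('a^3) set \<Rightarrow> bool" where
  "is_lattice v L \<longleftrightarrow> (\<exists>f1 f2 f3. kbasis f1 f2 f3 \<and> L = Rspan v f1 f2 f3)"

definition homothetic :: "('a::field^3) set \<Rightarrow> ('a^3) set \<Rightarrow> bool" where
  "homothetic L M \<longleftrightarrow> (\<exists>\<alpha>. \<alpha> \<noteq> 0 \<and> M = sm \<alpha> ` L)"

text \<open>The line between [L] and [M] is unbent: elementary divisor form with exponents
  m1 \<le> m2 \<le> m3 not strictly increasing.\<close>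
definition unbent :: "('a::field \<Rightarrow> int) \<Rightarrow> 'a \<Rightarrow> ('a^3) set \<Rightarrow> ('a^3) set \<Rightarrow> bool" where
  "unbent v \<pi> L M \<longleftrightarrow> (\<exists>e1 e2 e3 m1 m2 m3. kbasis e1 e2 e3 \<and> L = Rspan v e1 e2 e3 \<and>
      M = Rspan v (sm (\<pi> powi m1) e1) (sm (\<pi> powi m2) e2) (sm (\<pi> powi m3) e3) \<and>
      m1 \<le> m2 \<and> m2 \<le> m3 \<and> \<not> (m1 < m2 \<and> m2 < m3))"

definition in_apartment :: "('a::field \<Rightarrow> int) \<Rightarrow> 'a \<Rightarrow> ('a^3) set set \<Rightarrow> bool" where
  "in_apartment v \<pi> S \<longleftrightarrow> (\<exists>f1 f2 f3. kbasis f1 f2 f3 \<and> (\<forall>L\<in>S. \<exists>m1 m2 m3.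
      homothetic L (Rspan v (sm (\<pi> powi m1) f1) (sm (\<pi> powi m2) f2) (sm (\<pi> powi m3) f3))))"

end

theory Submission
  imports Defs
begin

(* Fix L1 = R{e1,e2,e3}.  An unbent line from [L1] to [L2] means that, up to
   homothety, L2 is of "line type" R{e1, pi^s e2, pi^s e3} or of "point type"
   R{e1, e2, pi^s e3} with s > 0, for a suitable basis e of L1.  Hence there are three cases
   (line/line, line/point, point/point; point/line is symmetric), with L3 written in its own
   normal form with respect to a second basis f of L1.  In every case one expresses a vector
   of one basis in the other basis; the coordinates lie in R and one of them is a unit.
   Either a unit sits in a position that lets the two bases be merged into one basis
   exhibiting all three lattices (a common apartment), or, after unimodular changes of basis,
   the pair L2, L3 takes the shape
       L2 = R{e1, pi^a e2, pi^s e3},   L3 = R{e1 + c e3, pi^b e2, pi^u e3}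
   with c a non-unit and (a, b) one of (s, u), (s, 0), (0, 0).  The lemma shear_pair treats
   this shape once and for all: if v(c) >= s or v(c) >= u the shear is absorbed by L2 or by L3
   and the three lattices lie in an apartment, otherwise 0 < v(c) < s, u and the pair is one
   of the special forms (i)-(iii). *)

section \<open>Discrete valuations with a uniformizer\<close>

locale uniformized_valuation =
  fixes v :: "'a::field \<Rightarrow> int" and p :: 'a
  assumes discrete: "discrete_valuation v" and p_nonzero: "p \<noteq> 0" and v_p: "v p = 1"
begin

declare p_nonzero [simp]

abbreviation R :: "'a set" where "R \<equiv> valring v"

definition vunit :: "'a \<Rightarrow> bool" where "vunit x \<longleftrightarrow> x \<noteq> 0 \<and> v x = 0"

lemma v_mult: "x \<noteq> 0 \<Longrightarrow> y \<noteq> 0 \<Longrightarrow> v (x * y) = v x + v y"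
  using discrete unfolding discrete_valuation_def by blast

lemma v_add: "x \<noteq> 0 \<Longrightarrow> y \<noteq> 0 \<Longrightarrow> x + y \<noteq> 0 \<Longrightarrow> min (v x) (v y) \<le> v (x + y)"
  using discrete unfolding discrete_valuation_def by blast

lemma v_one: "v 1 = 0"
  using v_mult[of 1 1] by simp

lemma v_inverse: "x \<noteq> 0 \<Longrightarrow> v (inverse x) = - v x"
  using v_mult[of x "inverse x"] v_one by simp

lemma v_divide: "x \<noteq> 0 \<Longrightarrow> y \<noteq> 0 \<Longrightarrow> v (x / y) = v x - v y"
  by (simp add: divide_inverse v_mult v_inverse)

lemma v_uminus: "x \<noteq> 0 \<Longrightarrow> v (- x) = v x"
proof -
  have "v (-1) = 0" using v_mult[of "-1" "-1"] v_one by simp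
  then show "x \<noteq> 0 \<Longrightarrow> v (- x) = v x" using v_mult[of "-1" x] by simp
qed

lemma v_power_int: "v (p powi n) = n"
proof -
  have nat_pow: "v (p ^ k) = int k" for k
    by (induction k) (auto simp: v_one v_mult v_p)
  show ?thesis
    by (cases "n \<ge> 0") (simp_all add: power_int_def nat_pow power_inverse v_inverse)
qed

lemma mem_R: "x \<in> R \<longleftrightarrow> x = 0 \<or> 0 \<le> v x"
  by (simp add: valring_def)

lemma R_zero [simp]: "0 \<in> R" and R_one [simp]: "1 \<in> R"
  by (simp_all add: mem_R v_one)

lemma R_mult [simp, intro]: "x \<in> R \<Longrightarrow> y \<in> R \<Longrightarrow> x * y \<in> R"
  by (cases "x = 0"; cases "y = 0") (auto simp: mem_R v_mult)

lemma R_uminus [simp]: "- x \<in> R \<longleftrightarrow> x \<in> R"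
  by (cases "x = 0") (auto simp: mem_R v_uminus)

lemma R_add [simp, intro]: "x \<in> R \<Longrightarrow> y \<in> R \<Longrightarrow> x + y \<in> R"
  using v_add[of x y] by (cases "x = 0"; cases "y = 0"; cases "x + y = 0") (auto simp: mem_R)

lemma R_power_int [simp, intro]: "0 \<le> n \<Longrightarrow> p powi n \<in> R"
  by (simp add: mem_R v_power_int)

lemma R_divide: "x = 0 \<or> (y \<noteq> 0 \<and> v y \<le> v x) \<Longrightarrow> x / y \<in> R"
  by (cases "x = 0") (auto simp: mem_R v_divide)

lemma R_divide_power: "x = 0 \<or> n \<le> v x \<Longrightarrow> x / p powi n \<in> R"
  by (rule R_divide) (auto simp: v_power_int)

lemma vunit_R: "vunit x \<Longrightarrow> x \<in> R"
  by (simp add: vunit_def mem_R)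

lemma vunit_nonzero: "vunit x \<Longrightarrow> x \<noteq> 0"
  by (simp add: vunit_def)

lemma vunit_one [simp]: "vunit 1"
  by (simp add: vunit_def v_one)

lemma vunit_divide: "x \<noteq> 0 \<Longrightarrow> y \<noteq> 0 \<Longrightarrow> v x = v y \<Longrightarrow> vunit (x / y)"
  by (simp add: vunit_def v_divide)

lemma vunit_inverse: "vunit x \<Longrightarrow> vunit (1 / x)"
  by (simp add: vunit_def v_divide v_one)

lemma vunit_uminus: "vunit x \<Longrightarrow> vunit (- x)"
  by (simp add: vunit_def v_uminus)

lemma R_divide_vunit: "x \<in> R \<Longrightarrow> vunit y \<Longrightarrow> x / y \<in> R"
  by (cases "x = 0") (auto simp: vunit_def mem_R v_divide)

lemma nonunit_divide_vunit: "x \<in> R \<Longrightarrow> \<not> vunit x \<Longrightarrow> vunit y \<Longrightarrow> \<not> vunit (x / y)"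
  by (cases "x = 0") (auto simp: vunit_def mem_R v_divide)

lemma nonunit_cases: "x \<in> R \<Longrightarrow> \<not> vunit x \<Longrightarrow> x = 0 \<or> 1 \<le> v x"
  by (auto simp: mem_R vunit_def)

lemma vunit_normalize: "x \<noteq> 0 \<Longrightarrow> vunit (x / p powi (v x))"
  by (rule vunit_divide) (auto simp: v_power_int)

end

section \<open>Coordinates and bases of K^3\<close>

lemma lincomb_nth [simp]: "lincomb a b c f1 f2 f3 $ i = a * f1 $ i + b * f2 $ i + c * f3 $ i"
  by (simp add: lincomb_def sm_def)

lemma sm_nth [simp]: "sm c x $ i = c * x $ i"
  by (simp add: sm_def)

lemma sm_sm: "sm a (sm b x) = sm (a * b) x"
  by (simp add: vec_eq_iff)

lemma sm_one [simp]: "sm 1 x = x"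
  by (simp add: vec_eq_iff)

lemma lincomb_swap12: "lincomb a b c f1 f2 f3 = lincomb b a c f2 f1 f3"
  by (simp add: vec_eq_iff algebra_simps)

lemma lincomb_swap23: "lincomb a b c f1 f2 f3 = lincomb a c b f1 f3 f2"
  by (simp add: vec_eq_iff algebra_simps)

lemma lincomb_lincomb:
  "lincomb \<alpha> \<beta> \<gamma> (lincomb a1 b1 c1 f1 f2 f3) (lincomb a2 b2 c2 f1 f2 f3) (lincomb a3 b3 c3 f1 f2 f3)
   = lincomb (\<alpha>*a1 + \<beta>*a2 + \<gamma>*a3) (\<alpha>*b1 + \<beta>*b2 + \<gamma>*b3) (\<alpha>*c1 + \<beta>*c2 + \<gamma>*c3) f1 f2 f3"
  by (simp add: vec_eq_iff algebra_simps)

lemma sm_lincomb: "sm k (lincomb a b c f1 f2 f3) = lincomb (k*a) (k*b) (k*c) f1 f2 f3"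
  by (simp add: vec_eq_iff algebra_simps)

lemma kbasis_coords_unique:
  assumes "kbasis f1 f2 f3" and "lincomb a b c f1 f2 f3 = lincomb a' b' c' f1 f2 f3"
  shows "a = a' \<and> b = b' \<and> c = c'"
proof -
  have "lincomb (a - a') (b - b') (c - c') f1 f2 f3 = 0"
    using assms(2) by (simp add: vec_eq_iff algebra_simps)
  then have "a - a' = 0 \<and> b - b' = 0 \<and> c - c' = 0"
    using assms(1) unfolding kbasis_def by blast
  then show ?thesis by simp
qed

lemma kbasis_swap12: "kbasis f1 f2 f3 \<Longrightarrow> kbasis f2 f1 f3"
  unfolding kbasis_def by (metis lincomb_swap12)

lemma kbasis_swap23: "kbasis f1 f2 f3 \<Longrightarrow> kbasis f1 f3 f2"
  unfolding kbasis_def by (metis lincomb_swap23)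

lemma kbasis_replace1:
  assumes kb: "kbasis f1 f2 f3" and a: "a \<noteq> 0" and g: "g = lincomb a b c f1 f2 f3"
  shows "kbasis g f2 f3"
  unfolding kbasis_def
proof safe
  fix x
  obtain \<alpha> \<beta> \<gamma> where x: "x = lincomb \<alpha> \<beta> \<gamma> f1 f2 f3"
    using kb unfolding kbasis_def by blast
  have "x = lincomb (\<alpha>/a) (\<beta> - b*\<alpha>/a) (\<gamma> - c*\<alpha>/a) g f2 f3"
    unfolding x g using a by (simp add: vec_eq_iff field_simps)
  then show "\<exists>a b c. x = lincomb a b c g f2 f3" by blast
next
  fix x y z assume "lincomb x y z g f2 f3 = 0"
  moreover have "lincomb x y z g f2 f3 = lincomb (x*a) (x*b + y) (x*c + z) f1 f2 f3"
    unfolding g by (simp add: vec_eq_iff algebra_simps)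
  ultimately have "x*a = 0" "x*b + y = 0" "x*c + z = 0"
    using kb unfolding kbasis_def by metis+
  with a show "x = 0" "y = 0" "z = 0" by auto
qed

lemma kbasis_replace2: "kbasis f1 f2 f3 \<Longrightarrow> b \<noteq> 0 \<Longrightarrow> g = lincomb a b c f1 f2 f3 \<Longrightarrow> kbasis f1 g f3"
  by (metis kbasis_swap12 kbasis_replace1 lincomb_swap12)

lemma kbasis_replace3: "kbasis f1 f2 f3 \<Longrightarrow> c \<noteq> 0 \<Longrightarrow> g = lincomb a b c f1 f2 f3 \<Longrightarrow> kbasis f1 f2 g"
  by (metis kbasis_swap23 kbasis_replace2 lincomb_swap23)

lemma kbasis_coords:
  assumes "kbasis e1 e2 e3"
  obtains a b c where "x = lincomb a b c e1 e2 e3"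
  using assms unfolding kbasis_def by blast

section \<open>Homothety\<close>

lemma sm_image_Rspan: "sm \<alpha> ` Rspan v f1 f2 f3 = Rspan v (sm \<alpha> f1) (sm \<alpha> f2) (sm \<alpha> f3)"
proof -
  have lin: "sm \<alpha> (lincomb a b c f1 f2 f3) = lincomb a b c (sm \<alpha> f1) (sm \<alpha> f2) (sm \<alpha> f3)" for a b c
    by (simp add: vec_eq_iff algebra_simps)
  have span: "Rspan v g1 g2 g3 = (\<lambda>(a, b, c). lincomb a b c g1 g2 g3) ` (valring v \<times> valring v \<times> valring v)"
    for g1 g2 g3 :: "'a^3"
    unfolding Rspan_def by (auto simp: image_iff) (metis (mono_tags) SigmaI case_prod_conv)
  show ?thesis unfolding span image_image by (simp add: lin case_prod_beta)
qed

lemma homothetic_refl: "homothetic L L"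
  unfolding homothetic_def by (rule exI[of _ 1]) simp

lemma homothetic_trans:
  fixes L M N :: "('a::field^3) set"
  shows "homothetic L M \<Longrightarrow> homothetic M N \<Longrightarrow> homothetic L N"
  unfolding homothetic_def
proof clarify
  fix a b :: 'a assume "a \<noteq> 0" "b \<noteq> 0"
  then show "\<exists>\<gamma>. \<gamma> \<noteq> 0 \<and> sm b ` sm a ` L = sm \<gamma> ` L"
    by (intro exI[of _ "b * a"]) (auto simp: image_image sm_sm)
qed

lemma homothetic_sym:
  fixes L M :: "('a::field^3) set"
  shows "homothetic L M \<Longrightarrow> homothetic M L"
  unfolding homothetic_def
proof clarify
  fix a :: 'a assume "a \<noteq> 0"
  then show "\<exists>\<gamma>. \<gamma> \<noteq> 0 \<and> L = sm \<gamma> ` sm a ` L"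
    by (intro exI[of _ "inverse a"]) (auto simp: image_image sm_sm)
qed

section \<open>R-spans and changes of basis\<close>

context uniformized_valuation
begin

abbreviation pmul :: "int \<Rightarrow> 'a^3 \<Rightarrow> 'a^3" where "pmul n x \<equiv> sm (p powi n) x"

lemma mem_Rspan:
  "x \<in> Rspan v f1 f2 f3 \<longleftrightarrow> (\<exists>a b c. a \<in> R \<and> b \<in> R \<and> c \<in> R \<and> x = lincomb a b c f1 f2 f3)"
  unfolding Rspan_def by blast

lemma Rspan_memI: "a \<in> R \<Longrightarrow> b \<in> R \<Longrightarrow> c \<in> R \<Longrightarrow> x = lincomb a b c f1 f2 f3 \<Longrightarrow> x \<in> Rspan v f1 f2 f3"
  unfolding Rspan_def by blast

lemma Rspan_subset:
  assumes "g1 \<in> Rspan v f1 f2 f3" "g2 \<in> Rspan v f1 f2 f3" "g3 \<in> Rspan v f1 f2 f3"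
  shows "Rspan v g1 g2 g3 \<subseteq> Rspan v f1 f2 f3"
proof
  fix x assume "x \<in> Rspan v g1 g2 g3"
  then obtain \<alpha> \<beta> \<gamma> where x: "\<alpha> \<in> R" "\<beta> \<in> R" "\<gamma> \<in> R" "x = lincomb \<alpha> \<beta> \<gamma> g1 g2 g3"
    unfolding mem_Rspan by blast
  obtain a1 b1 c1 where 1: "a1 \<in> R" "b1 \<in> R" "c1 \<in> R" "g1 = lincomb a1 b1 c1 f1 f2 f3"
    using assms(1) unfolding mem_Rspan by blast
  obtain a2 b2 c2 where 2: "a2 \<in> R" "b2 \<in> R" "c2 \<in> R" "g2 = lincomb a2 b2 c2 f1 f2 f3"
    using assms(2) unfolding mem_Rspan by blast
  obtain a3 b3 c3 where 3: "a3 \<in> R" "b3 \<in> R" "c3 \<in> R" "g3 = lincomb a3 b3 c3 f1 f2 f3"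
    using assms(3) unfolding mem_Rspan by blast
  show "x \<in> Rspan v f1 f2 f3"
    unfolding x(4) 1(4) 2(4) 3(4) lincomb_lincomb using x 1 2 3 by (intro Rspan_memI[OF _ _ _ refl]) auto
qed

lemma Rspan_gen1: "f1 \<in> Rspan v f1 f2 f3"
  by (rule Rspan_memI[of 1 0 0]) (auto simp: vec_eq_iff)

lemma Rspan_gen2: "f2 \<in> Rspan v f1 f2 f3"
  by (rule Rspan_memI[of 0 1 0]) (auto simp: vec_eq_iff)

lemma Rspan_gen3: "f3 \<in> Rspan v f1 f2 f3"
  by (rule Rspan_memI[of 0 0 1]) (auto simp: vec_eq_iff)

lemma Rspan_eqI:
  assumes "g1 \<in> Rspan v f1 f2 f3" "g2 \<in> Rspan v f1 f2 f3" "g3 \<in> Rspan v f1 f2 f3"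
    and "f1 \<in> Rspan v g1 g2 g3" "f2 \<in> Rspan v g1 g2 g3" "f3 \<in> Rspan v g1 g2 g3"
  shows "Rspan v g1 g2 g3 = Rspan v f1 f2 f3"
  using Rspan_subset assms by (meson subset_antisym)

lemma Rspan_swap12: "Rspan v f1 f2 f3 = Rspan v f2 f1 f3"
  by (rule Rspan_eqI) (simp_all add: Rspan_gen1 Rspan_gen2 Rspan_gen3)

lemma Rspan_swap23: "Rspan v f1 f2 f3 = Rspan v f1 f3 f2"
  by (rule Rspan_eqI) (simp_all add: Rspan_gen1 Rspan_gen2 Rspan_gen3)

lemma Rspan_replace1:
  assumes a: "vunit a" and bc: "b \<in> R" "c \<in> R" and g: "g = lincomb a b c f1 f2 f3"
  shows "Rspan v g f2 f3 = Rspan v f1 f2 f3"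
proof (rule Rspan_eqI)
  show "g \<in> Rspan v f1 f2 f3" using g a bc by (intro Rspan_memI[of a b c]) (auto simp: vunit_R)
  show "f2 \<in> Rspan v f1 f2 f3" "f3 \<in> Rspan v f1 f2 f3" "f2 \<in> Rspan v g f2 f3" "f3 \<in> Rspan v g f2 f3"
    by (auto simp: Rspan_gen2 Rspan_gen3)
  have "f1 = lincomb (1/a) (- b/a) (- c/a) g f2 f3"
    using g vunit_nonzero[OF a] by (simp add: vec_eq_iff field_simps)
  moreover have "1/a \<in> R" "- b/a \<in> R" "- c/a \<in> R"
    using a bc by (simp_all add: R_divide_vunit)
  ultimately show "f1 \<in> Rspan v g f2 f3" using Rspan_memI[of "1/a" "- b/a" "- c/a" f1 g f2 f3] by blast
qed

lemma Rspan_replace2: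
  assumes "vunit b" "a \<in> R" "c \<in> R" "g = lincomb a b c f1 f2 f3"
  shows "Rspan v f1 g f3 = Rspan v f1 f2 f3"
proof -
  have "Rspan v g f1 f3 = Rspan v f2 f1 f3"
    by (rule Rspan_replace1[OF assms(1-3)]) (simp add: assms(4) lincomb_swap12)
  then show ?thesis by (simp only: Rspan_swap12[of f1])
qed

lemma Rspan_replace3:
  assumes "vunit c" "a \<in> R" "b \<in> R" "g = lincomb a b c f1 f2 f3"
  shows "Rspan v f1 f2 g = Rspan v f1 f2 f3"
proof -
  have "Rspan v f1 g f2 = Rspan v f1 f3 f2"
    by (rule Rspan_replace2[OF assms(1-3)]) (simp add: assms(4) lincomb_swap23)
  then show ?thesis by (simp only: Rspan_swap23[of f1])
qed

lemma Rspan_vunit_scale3: "vunit \<epsilon> \<Longrightarrow> Rspan v f1 f2 (sm \<epsilon> f3) = Rspan v f1 f2 f3"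
  by (rule Rspan_replace3[of \<epsilon> 0 0]) (simp_all add: vec_eq_iff)

text \<open>For a scalar alpha in R, R{x, alpha g2, alpha g3} = R x + alpha L with L = R{x, g2, g3};
  hence this "line lattice" depends only on x and L, not on the completion g2, g3.\<close>
lemma line_lattice_transport_subset:
  assumes "Rspan v x g2 g3 = Rspan v x f2 f3" "\<alpha> \<in> R"
  shows "Rspan v x (sm \<alpha> g2) (sm \<alpha> g3) \<subseteq> Rspan v x (sm \<alpha> f2) (sm \<alpha> f3)"
proof (rule Rspan_subset)
  show "x \<in> Rspan v x (sm \<alpha> f2) (sm \<alpha> f3)" by (rule Rspan_gen1)
  have "g2 \<in> Rspan v x f2 f3" using assms(1) Rspan_gen2[of g2 x g3] by simp
  then obtain a b c where 2: "a \<in> R" "b \<in> R" "c \<in> R" "g2 = lincomb a b c x f2 f3"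
    unfolding mem_Rspan by blast
  show "sm \<alpha> g2 \<in> Rspan v x (sm \<alpha> f2) (sm \<alpha> f3)"
    using 2 assms(2) by (intro Rspan_memI[of "\<alpha>*a" b c]) (auto simp: vec_eq_iff algebra_simps)
  have "g3 \<in> Rspan v x f2 f3" using assms(1) Rspan_gen3[of g3 x g2] by simp
  then obtain a b c where 3: "a \<in> R" "b \<in> R" "c \<in> R" "g3 = lincomb a b c x f2 f3"
    unfolding mem_Rspan by blast
  show "sm \<alpha> g3 \<in> Rspan v x (sm \<alpha> f2) (sm \<alpha> f3)"
    using 3 assms(2) by (intro Rspan_memI[of "\<alpha>*a" b c]) (auto simp: vec_eq_iff algebra_simps)
qed

lemma line_lattice_transport:
  "Rspan v x g2 g3 = Rspan v x f2 f3 \<Longrightarrow> \<alpha> \<in> R \<Longrightarrow>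
   Rspan v x (sm \<alpha> g2) (sm \<alpha> g3) = Rspan v x (sm \<alpha> f2) (sm \<alpha> f3)"
  using line_lattice_transport_subset[of x g2 g3 f2 f3 \<alpha>]
    line_lattice_transport_subset[of x f2 f3 g2 g3 \<alpha>] by auto

text \<open>Likewise R{x, y, alpha g} = R x + R y + alpha L depends only on x, y and L.\<close>
lemma plane_lattice_transport_subset:
  assumes "Rspan v x y g = Rspan v x y f" "\<alpha> \<in> R"
  shows "Rspan v x y (sm \<alpha> g) \<subseteq> Rspan v x y (sm \<alpha> f)"
proof (rule Rspan_subset)
  show "x \<in> Rspan v x y (sm \<alpha> f)" by (rule Rspan_gen1)
  show "y \<in> Rspan v x y (sm \<alpha> f)" by (rule Rspan_gen2)
  have "g \<in> Rspan v x y f" using assms(1) Rspan_gen3[of g x y] by simp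
  then obtain a b c where 3: "a \<in> R" "b \<in> R" "c \<in> R" "g = lincomb a b c x y f"
    unfolding mem_Rspan by blast
  show "sm \<alpha> g \<in> Rspan v x y (sm \<alpha> f)"
    using 3 assms(2) by (intro Rspan_memI[of "\<alpha>*a" "\<alpha>*b" c]) (auto simp: vec_eq_iff algebra_simps)
qed

lemma plane_lattice_transport:
  "Rspan v x y g = Rspan v x y f \<Longrightarrow> \<alpha> \<in> R \<Longrightarrow> Rspan v x y (sm \<alpha> g) = Rspan v x y (sm \<alpha> f)"
  using plane_lattice_transport_subset[of x y g f \<alpha>] plane_lattice_transport_subset[of x y f g \<alpha>]
  by auto

text \<open>If two bases span the same lattice, the first vector of one has coordinates in R with
  respect to the other, and one of them is a unit (the vector is primitive): otherwise
  f1 / p would lie in the lattice, contradicting the uniqueness of coordinates.\<close>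
lemma lattice_vector_coords:
  assumes kf: "kbasis f1 f2 f3" and ke: "kbasis e1 e2 e3"
    and eq: "Rspan v f1 f2 f3 = Rspan v e1 e2 e3" and f1: "f1 = lincomb a b c e1 e2 e3"
  shows "a \<in> R" "b \<in> R" "c \<in> R" "vunit a \<or> vunit b \<or> vunit c"
proof -
  have "f1 \<in> Rspan v e1 e2 e3" using Rspan_gen1[of f1 f2 f3] eq by simp
  then obtain a' b' c' where "a' \<in> R" "b' \<in> R" "c' \<in> R" "f1 = lincomb a' b' c' e1 e2 e3"
    unfolding mem_Rspan by blast
  with f1 kbasis_coords_unique[OF ke] show in_R: "a \<in> R" "b \<in> R" "c \<in> R" by metis+
  show "vunit a \<or> vunit b \<or> vunit c"
  proof (rule ccontr)
    assume "\<not> (vunit a \<or> vunit b \<or> vunit c)"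
    then have "x / p \<in> R" if "x \<in> {a, b, c}" for x
      using that in_R nonunit_cases[of x] by (intro R_divide) (auto simp: v_p)
    then have "lincomb (a/p) (b/p) (c/p) e1 e2 e3 \<in> Rspan v e1 e2 e3"
      by (intro Rspan_memI[OF _ _ _ refl]) auto
    then have "lincomb (a/p) (b/p) (c/p) e1 e2 e3 \<in> Rspan v f1 f2 f3"
      using eq by simp
    then obtain x y z where xyz: "x \<in> R" "lincomb (a/p) (b/p) (c/p) e1 e2 e3 = lincomb x y z f1 f2 f3"
      unfolding mem_Rspan by blast
    have "lincomb 1 0 0 f1 f2 f3 = sm p (lincomb (a/p) (b/p) (c/p) e1 e2 e3)"
      using f1 by (simp add: vec_eq_iff field_simps)
    also have "\<dots> = lincomb (p*x) (p*y) (p*z) f1 f2 f3"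
      by (simp add: xyz(2) sm_lincomb)
    finally have "p * x = 1" using kbasis_coords_unique[OF kf] by metis
    then have x0: "x \<noteq> 0" by auto
    have "v p + v x = 0" using v_mult[OF p_nonzero x0] v_one \<open>p * x = 1\<close> by simp
    with xyz(1) x0 v_p show False by (auto simp: mem_R)
  qed
qed

end

section \<open>The conclusion of the theorem and its invariances\<close>

definition special_position ::
  "('a::field \<Rightarrow> int) \<Rightarrow> 'a \<Rightarrow> 'a^3 \<Rightarrow> 'a^3 \<Rightarrow> 'a^3 \<Rightarrow> int \<Rightarrow> int \<Rightarrow> int \<Rightarrow> ('a^3) set \<Rightarrow> ('a^3) set \<Rightarrow> bool"
where
  "special_position v \<pi> e1 e2 e3 t s u A B \<longleftrightarrow>
     (A = Rspan v e1 (sm (\<pi> powi s) e2) (sm (\<pi> powi s) e3) \<and>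
      B = Rspan v (e1 + sm (\<pi> powi t) e2) (sm (\<pi> powi u) e2) (sm (\<pi> powi u) e3)) \<or>
     (A = Rspan v e1 (sm (\<pi> powi s) e2) (sm (\<pi> powi s) e3) \<and>
      B = Rspan v (e1 + sm (\<pi> powi t) e3) e2 (sm (\<pi> powi u) e3)) \<or>
     (A = Rspan v e1 e2 (sm (\<pi> powi s) e3) \<and>
      B = Rspan v (e1 + sm (\<pi> powi t) e3) e2 (sm (\<pi> powi u) e3))"

definition apartment_or_special ::
  "('a::field \<Rightarrow> int) \<Rightarrow> 'a \<Rightarrow> ('a^3) set \<Rightarrow> ('a^3) set \<Rightarrow> ('a^3) set \<Rightarrow> bool"
where
  "apartment_or_special v \<pi> L1 L2 L3 \<longleftrightarrow> in_apartment v \<pi> {L1, L2, L3} \<or>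
    (\<exists>e1 e2 e3 t s u. kbasis e1 e2 e3 \<and> L1 = Rspan v e1 e2 e3 \<and> 0 < t \<and> t < s \<and> t < u \<and>
       (\<exists>A B. ((homothetic L2 A \<and> homothetic L3 B) \<or> (homothetic L3 A \<and> homothetic L2 B)) \<and>
          special_position v \<pi> e1 e2 e3 t s u A B))"

lemma apartment_or_specialI:
  assumes "kbasis e1 e2 e3" "L1 = Rspan v e1 e2 e3" "0 < t" "t < s" "t < u"
    and "special_position v \<pi> e1 e2 e3 t s u A B"
    and "(homothetic L2 A \<and> homothetic L3 B) \<or> (homothetic L3 A \<and> homothetic L2 B)"
  shows "apartment_or_special v \<pi> L1 L2 L3"
  using assms unfolding apartment_or_special_def by blast

lemma apartment_or_special_swap:
  "apartment_or_special v \<pi> L1 L2 L3 \<Longrightarrow> apartment_or_special v \<pi> L1 L3 L2"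
  unfolding apartment_or_special_def by (simp add: insert_commute) blast

lemma in_apartment_homothetic:
  assumes apt: "in_apartment v \<pi> {L1, L2, L3}" and h: "homothetic L2 L2'" "homothetic L3 L3'"
  shows "in_apartment v \<pi> {L1, L2', L3'}"
proof -
  obtain f1 f2 f3 where kb: "kbasis f1 f2 f3" and std: "\<forall>L\<in>{L1, L2, L3}. \<exists>m1 m2 m3.
      homothetic L (Rspan v (sm (\<pi> powi m1) f1) (sm (\<pi> powi m2) f2) (sm (\<pi> powi m3) f3))"
    using apt unfolding in_apartment_def by blast
  have "\<exists>m1 m2 m3. homothetic L' (Rspan v (sm (\<pi> powi m1) f1) (sm (\<pi> powi m2) f2) (sm (\<pi> powi m3) f3))"
    if "L' \<in> {L1, L2', L3'}" for L'
  proof -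
    have "homothetic L2' L2" "homothetic L3' L3" using h homothetic_sym by blast+
    with that have "\<exists>L\<in>{L1, L2, L3}. homothetic L' L" by (auto simp: homothetic_refl)
    then show ?thesis using std homothetic_trans by blast
  qed
  with kb show ?thesis unfolding in_apartment_def by blast
qed

lemma apartment_or_special_homothetic:
  assumes c: "apartment_or_special v \<pi> L1 L2 L3" and h: "homothetic L2 L2'" "homothetic L3 L3'"
  shows "apartment_or_special v \<pi> L1 L2' L3'"
proof -
  have h': "homothetic L2' L2" "homothetic L3' L3" using h homothetic_sym by blast+
  from c consider (apartment) "in_apartment v \<pi> {L1, L2, L3}"
    | (special) e1 e2 e3 t s u A B where "kbasis e1 e2 e3" "L1 = Rspan v e1 e2 e3"
        "0 < t" "t < s" "t < u" "special_position v \<pi> e1 e2 e3 t s u A B"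
        "(homothetic L2 A \<and> homothetic L3 B) \<or> (homothetic L3 A \<and> homothetic L2 B)"
    unfolding apartment_or_special_def by blast
  then show ?thesis
  proof cases
    case apartment
    then show ?thesis
      unfolding apartment_or_special_def by (rule disjI1[OF in_apartment_homothetic[OF _ h]])
  next
    case special
    have "homothetic L2' A \<and> homothetic L3' B \<or> homothetic L3' A \<and> homothetic L2' B"
      using special(7) homothetic_trans[OF h'(1)] homothetic_trans[OF h'(2)] by blast
    with special(1-6) show ?thesis by (rule apartment_or_specialI)
  qed
qed

context uniformized_valuation
begin

lemma apartmentI:
  assumes "kbasis f1 f2 f3" "L1 = Rspan v f1 f2 f3"
    and "L2 = Rspan v (pmul a1 f1) (pmul a2 f2) (pmul a3 f3)"
    and "L3 = Rspan v (pmul b1 f1) (pmul b2 f2) (pmul b3 f3)"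
  shows "apartment_or_special v p L1 L2 L3"
proof -
  have "L1 = Rspan v (pmul 0 f1) (pmul 0 f2) (pmul 0 f3)" using assms(2) by simp
  then have "in_apartment v p {L1, L2, L3}"
    unfolding in_apartment_def using assms(1,3,4) homothetic_refl by blast
  then show ?thesis unfolding apartment_or_special_def by blast
qed

lemma special_position_shear:
  assumes ke: "kbasis e1 e2 e3" and t: "0 < t" "t < s" "t < u"
    and ab: "(a, b) \<in> {(s, u), (s, 0), (0, 0)}"
  shows "apartment_or_special v p (Rspan v e1 e2 e3) (Rspan v e1 (pmul a e2) (pmul s e3))
           (Rspan v (e1 + pmul t e3) (pmul b e2) (pmul u e3))"
proof -
  have "\<exists>f2 f3. kbasis e1 f2 f3 \<and> Rspan v e1 e2 e3 = Rspan v e1 f2 f3 \<and>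
          special_position v p e1 f2 f3 t s u (Rspan v e1 (pmul a e2) (pmul s e3))
            (Rspan v (e1 + pmul t e3) (pmul b e2) (pmul u e3))"
  proof (cases "(a, b) = (s, u)")
    case True
    then show ?thesis
      using kbasis_swap23[OF ke] Rspan_swap23[of e1]
        Rspan_swap23[of "e1 + pmul t e3" "pmul u e2"]
      unfolding special_position_def by (intro exI[of _ e3] exI[of _ e2]) auto
  next
    case False
    with ab ke show ?thesis unfolding special_position_def by (intro exI[of _ e2] exI[of _ e3]) auto
  qed
  then obtain f2 f3 where "kbasis e1 f2 f3" "Rspan v e1 e2 e3 = Rspan v e1 f2 f3"
    "special_position v p e1 f2 f3 t s u (Rspan v e1 (pmul a e2) (pmul s e3))
       (Rspan v (e1 + pmul t e3) (pmul b e2) (pmul u e3))"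
    by blast
  from apartment_or_specialI[OF this(1,2) t this(3)] show ?thesis by (simp add: homothetic_refl)
qed

lemma shear_absorbed:
  assumes "c = 0 \<or> n \<le> v c"
  shows "Rspan v (e1 + sm c e3) x (pmul n e3) = Rspan v e1 x (pmul n e3)"
  by (rule Rspan_replace1[OF vunit_one R_zero R_divide_power[OF assms]]) (simp add: vec_eq_iff)

text \<open>If the shear is absorbed by L2 (v(c) >= s), the three
  lattices are diagonal in the basis e1 + c e3, e2, e3; if it is absorbed by L3 (v(c) >= u),
  they are diagonal in the basis e.\<close>
lemma shear_pair_absorbed:
  assumes ke: "kbasis e1 e2 e3" and c: "c \<in> R" and absorbed: "c = 0 \<or> s \<le> v c \<or> u \<le> v c"
  shows "apartment_or_special v p (Rspan v e1 e2 e3) (Rspan v e1 (pmul a e2) (pmul s e3))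
           (Rspan v (e1 + sm c e3) (pmul b e2) (pmul u e3))"
proof (cases "c = 0 \<or> s \<le> v c")
  case True
  define y where "y = e1 + sm c e3"
  have kb: "kbasis y e2 e3"
    by (rule kbasis_replace1[OF ke one_neq_zero, where b=0 and c=c]) (simp add: y_def vec_eq_iff)
  have L1: "Rspan v e1 e2 e3 = Rspan v y e2 e3"
    by (rule Rspan_replace1[OF vunit_one R_zero c, symmetric]) (simp add: y_def vec_eq_iff)
  have L2: "Rspan v e1 (pmul a e2) (pmul s e3) = Rspan v (pmul 0 y) (pmul a e2) (pmul s e3)"
    using shear_absorbed[OF True] by (simp add: y_def)
  have L3: "Rspan v (e1 + sm c e3) (pmul b e2) (pmul u e3) = Rspan v (pmul 0 y) (pmul b e2) (pmul u e3)"
    by (simp add: y_def)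
  show ?thesis by (rule apartmentI[OF kb L1 L2 L3])
next
  case False
  with absorbed have "c = 0 \<or> u \<le> v c" by auto
  then have L3: "Rspan v (e1 + sm c e3) (pmul b e2) (pmul u e3) = Rspan v (pmul 0 e1) (pmul b e2) (pmul u e3)"
    using shear_absorbed by simp
  have L2: "Rspan v e1 (pmul a e2) (pmul s e3) = Rspan v (pmul 0 e1) (pmul a e2) (pmul s e3)"
    by simp
  show ?thesis by (rule apartmentI[OF ke refl L2 L3])
qed

text \<open>Otherwise t = v(c) satisfies 0 < t < s, u, and rescaling e3 by the unit c / pi^t turns
  the pair into one of the special forms.\<close>
lemma shear_pair_special:
  assumes ke: "kbasis e1 e2 e3" and c: "c \<noteq> 0" and t: "0 < v c" "v c < s" "v c < u"
    and ab: "(a, b) \<in> {(s, u), (s, 0), (0, 0)}"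
  shows "apartment_or_special v p (Rspan v e1 e2 e3) (Rspan v e1 (pmul a e2) (pmul s e3))
           (Rspan v (e1 + sm c e3) (pmul b e2) (pmul u e3))"
proof -
  define \<epsilon> where "\<epsilon> = c / p powi (v c)"
  have unit: "vunit \<epsilon>" using vunit_normalize[OF c] \<epsilon>_def by simp
  have kE: "kbasis e1 e2 (sm \<epsilon> e3)"
    by (rule kbasis_replace3[OF ke vunit_nonzero[OF unit], where a=0 and b=0]) (simp add: vec_eq_iff)
  have pmul_scale: "pmul n (sm \<epsilon> e3) = sm \<epsilon> (pmul n e3)" for n
    by (simp add: sm_sm mult.commute)
  have shear: "e1 + sm \<epsilon> (pmul (v c) e3) = e1 + sm c e3"
    by (simp add: \<epsilon>_def vec_eq_iff)
  show ?thesis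
    using special_position_shear[OF kE t ab]
    by (simp add: shear pmul_scale Rspan_vunit_scale3[OF unit])
qed

lemma shear_pair:
  assumes ke: "kbasis e1 e2 e3" and ab: "(a, b) \<in> {(s, u), (s, 0), (0, 0)}"
    and c: "c \<in> R" "\<not> vunit c"
  shows "apartment_or_special v p (Rspan v e1 e2 e3) (Rspan v e1 (pmul a e2) (pmul s e3))
           (Rspan v (e1 + sm c e3) (pmul b e2) (pmul u e3))"
proof (cases "c = 0 \<or> s \<le> v c \<or> u \<le> v c")
  case True
  then show ?thesis by (rule shear_pair_absorbed[OF ke c(1)])
next
  case False
  then show ?thesis using shear_pair_special[OF ke _ _ _ _ ab] nonunit_cases[OF c] by simp
qed

section \<open>Two lattices of line type\<close>

text \<open>If f1 has a unit e2-coordinate, then e1, f1, e3 is a basis of L1 diagonalizing both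
  lattices.\<close>
lemma line_line_unit:
  assumes ke: "kbasis e1 e2 e3" and eq: "Rspan v f1 f2 f3 = Rspan v e1 e2 e3"
    and su: "0 \<le> s" "0 \<le> u"
    and f1: "f1 = lincomb a b c e1 e2 e3" and b: "vunit b" and ac: "a \<in> R" "c \<in> R"
  shows "apartment_or_special v p (Rspan v e1 e2 e3) (Rspan v e1 (pmul s e2) (pmul s e3))
           (Rspan v f1 (pmul u f2) (pmul u f3))"
proof -
  have kb: "kbasis e1 f1 e3" by (rule kbasis_replace2[OF ke vunit_nonzero[OF b] f1])
  have L1: "Rspan v e1 f1 e3 = Rspan v e1 e2 e3" by (rule Rspan_replace2[OF b ac f1])
  have L2: "Rspan v e1 (pmul s f1) (pmul s e3) = Rspan v e1 (pmul s e2) (pmul s e3)"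
    by (rule Rspan_replace2[OF b, where a="p powi s * a" and c=c])
      (use ac su in \<open>auto simp: f1 vec_eq_iff algebra_simps\<close>)
  have "Rspan v f1 e1 e3 = Rspan v f1 f2 f3" using L1 eq Rspan_swap12[of f1 e1 e3] by simp
  then have "Rspan v f1 (pmul u e1) (pmul u e3) = Rspan v f1 (pmul u f2) (pmul u f3)"
    by (rule line_lattice_transport) (use su in simp)
  then have L3: "Rspan v f1 (pmul u f2) (pmul u f3) = Rspan v (pmul u e1) (pmul 0 f1) (pmul u e3)"
    using Rspan_swap12[of f1 "pmul u e1"] by simp
  show ?thesis
    by (rule apartmentI[OF kb L1[symmetric] _ L3, of _ 0 s s]) (simp add: L2)
qed

text \<open>Write the normalized f1 as y = e1 + b e2 + c e3 with v(c) <= v(b).  Replacing e3 by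
  E3 = e3 + (b/c) e2 gives y = e1 + c E3 while both line lattices keep their shape, which is
  the shear configuration with exponents (s, u).\<close>
lemma line_line_shear_ordered:
  assumes ke: "kbasis e1 e2 e3" and eq: "Rspan v y g2 g3 = Rspan v e1 e2 e3"
    and y: "y = lincomb 1 b c e1 e2 e3" and c: "c \<in> R" "\<not> vunit c"
    and bc: "b = 0 \<or> (c \<noteq> 0 \<and> v c \<le> v b)" and su: "0 \<le> s" "0 \<le> u"
  shows "apartment_or_special v p (Rspan v e1 e2 e3) (Rspan v e1 (pmul s e2) (pmul s e3))
           (Rspan v y (pmul u g2) (pmul u g3))"
proof -
  define k where "k = b / c"
  have k: "k \<in> R" unfolding k_def using bc by (intro R_divide) auto
  define E3 where "E3 = lincomb 0 k 1 e1 e2 e3"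
  have kE: "kbasis e1 e2 E3" by (rule kbasis_replace3[OF ke one_neq_zero E3_def])
  have L1: "Rspan v e1 e2 E3 = Rspan v e1 e2 e3"
    by (rule Rspan_replace3[OF vunit_one R_zero k E3_def])
  have L2: "Rspan v e1 (pmul s e2) (pmul s E3) = Rspan v e1 (pmul s e2) (pmul s e3)"
    by (rule Rspan_replace3[OF vunit_one R_zero k]) (simp add: E3_def vec_eq_iff algebra_simps)
  have yE: "y = e1 + sm c E3"
    using bc by (auto simp: y E3_def k_def vec_eq_iff algebra_simps)
  have "Rspan v y e2 E3 = Rspan v e1 e2 E3"
    by (rule Rspan_replace1[OF vunit_one R_zero c(1)]) (simp add: yE vec_eq_iff)
  then have "Rspan v y (pmul u g2) (pmul u g3) = Rspan v y (pmul u e2) (pmul u E3)"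
    by (intro line_lattice_transport) (use eq L1 su in simp_all)
  then show ?thesis using shear_pair[OF kE _ c, where a=s and b=u and s=s and u=u] L1 L2 yE by simp
qed

lemma line_line_shear:
  assumes ke: "kbasis e1 e2 e3" and eq: "Rspan v y g2 g3 = Rspan v e1 e2 e3"
    and y: "y = lincomb 1 b c e1 e2 e3" and b: "b \<in> R" "\<not> vunit b" and c: "c \<in> R" "\<not> vunit c"
    and su: "0 \<le> s" "0 \<le> u"
  shows "apartment_or_special v p (Rspan v e1 e2 e3) (Rspan v e1 (pmul s e2) (pmul s e3))
           (Rspan v y (pmul u g2) (pmul u g3))"
proof (cases "b = 0 \<or> (c \<noteq> 0 \<and> v c \<le> v b)")
  case True
  then show ?thesis using line_line_shear_ordered[OF ke eq y c _ su] by blast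
next
  case False
  then have "c = 0 \<or> (b \<noteq> 0 \<and> v b \<le> v c)" by auto
  then have "apartment_or_special v p (Rspan v e1 e3 e2) (Rspan v e1 (pmul s e3) (pmul s e2))
               (Rspan v y (pmul u g2) (pmul u g3))"
    by (intro line_line_shear_ordered[OF kbasis_swap23[OF ke] _ _ b _ su])
      (use eq y in \<open>simp_all add: Rspan_swap23[of e1 e3 e2] lincomb_swap23\<close>)
  then show ?thesis by (simp add: Rspan_swap23[of e1 e3 e2] Rspan_swap23[of e1 "pmul s e3"])
qed

lemma line_line:
  assumes ke: "kbasis e1 e2 e3" and kf: "kbasis f1 f2 f3"
    and eq: "Rspan v f1 f2 f3 = Rspan v e1 e2 e3" and su: "0 \<le> s" "0 \<le> u"
  shows "apartment_or_special v p (Rspan v e1 e2 e3) (Rspan v e1 (pmul s e2) (pmul s e3))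
           (Rspan v f1 (pmul u f2) (pmul u f3))"
proof -
  obtain a b c where f1: "f1 = lincomb a b c e1 e2 e3" using kbasis_coords[OF ke] .
  note coords = lattice_vector_coords[OF kf ke eq f1]
  consider "vunit b" | "vunit c" | "vunit a" "\<not> vunit b" "\<not> vunit c" using coords(4) by blast
  then show ?thesis
  proof cases
    case 1
    then show ?thesis using line_line_unit[OF ke eq _ _ f1 1 coords(1,3)] su by simp
  next
    case 2
    have "apartment_or_special v p (Rspan v e1 e3 e2) (Rspan v e1 (pmul s e3) (pmul s e2))
            (Rspan v f1 (pmul u f2) (pmul u f3))"
      by (rule line_line_unit[OF kbasis_swap23[OF ke] _ _ _ _ 2 coords(1,2)])
        (use eq f1 su in \<open>simp_all add: Rspan_swap23[of e1 e3 e2] lincomb_swap23\<close>)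
    then show ?thesis by (simp add: Rspan_swap23[of e1 e3 e2] Rspan_swap23[of e1 "pmul s e3"])
  next
    case 3
    have unit: "vunit (1/a)" using vunit_inverse[OF 3(1)] .
    define y where "y = sm (1/a) f1"
    have y: "y = lincomb 1 (b/a) (c/a) e1 e2 e3"
      using vunit_nonzero[OF 3(1)] by (simp add: y_def f1 vec_eq_iff field_simps)
    have normalize: "Rspan v y g2 g3 = Rspan v f1 g2 g3" for g2 g3
      by (rule Rspan_replace1[OF unit R_zero R_zero]) (simp add: y_def vec_eq_iff)
    have "apartment_or_special v p (Rspan v e1 e2 e3) (Rspan v e1 (pmul s e2) (pmul s e3))
            (Rspan v y (pmul u f2) (pmul u f3))"
      by (rule line_line_shear[OF ke _ y _ _ _ _ su])
        (use eq normalize coords 3 in \<open>simp_all add: R_divide_vunit nonunit_divide_vunit\<close>)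
    then show ?thesis by (simp add: normalize)
  qed
qed

section \<open>A lattice of line type and one of point type\<close>

text \<open>If e1 has a unit f3-coordinate, then f1, f2, e1 is a basis of L1 diagonalizing both
  lattices.\<close>
lemma line_point_unit:
  assumes kf: "kbasis f1 f2 f3" and eq: "Rspan v f1 f2 f3 = Rspan v e1 e2 e3"
    and su: "0 \<le> s" "0 \<le> u"
    and e1: "e1 = lincomb a b c f1 f2 f3" and c: "vunit c" and ab: "a \<in> R" "b \<in> R"
  shows "apartment_or_special v p (Rspan v e1 e2 e3) (Rspan v e1 (pmul s e2) (pmul s e3))
           (Rspan v f1 f2 (pmul u f3))"
proof -
  have kb: "kbasis f1 f2 e1" by (rule kbasis_replace3[OF kf vunit_nonzero[OF c] e1])
  have L1: "Rspan v f1 f2 e1 = Rspan v e1 e2 e3" using Rspan_replace3[OF c ab e1] eq by simp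
  have "Rspan v e1 f1 f2 = Rspan v e1 e2 e3"
    using L1 Rspan_swap12[of e1 f1 f2] Rspan_swap23[of f1 e1 f2] by simp
  then have "Rspan v e1 (pmul s f1) (pmul s f2) = Rspan v e1 (pmul s e2) (pmul s e3)"
    by (rule line_lattice_transport) (use su in simp)
  then have L2: "Rspan v e1 (pmul s e2) (pmul s e3) = Rspan v (pmul s f1) (pmul s f2) (pmul 0 e1)"
    using Rspan_swap12[of e1 "pmul s f1"] Rspan_swap23[of "pmul s f1" e1] by simp
  have "Rspan v f1 f2 (pmul u e1) = Rspan v f1 f2 (pmul u f3)"
    by (rule Rspan_replace3[OF c, where a="p powi u * a" and b="p powi u * b"])
      (use ab su in \<open>auto simp: e1 vec_eq_iff algebra_simps\<close>)
  then show ?thesis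
    by (intro apartmentI[OF kb L1[symmetric] L2, of _ 0 0 u]) simp
qed

text \<open>If instead e1 has a unit f1-coordinate a and a non-unit f3-coordinate c, then e1, f2, f3
  is a basis of L1, L2 keeps its shape in it, and L3 = R{e1 - c f3, f2, pi^u f3}: the shear
  configuration with exponents (s, 0).\<close>
lemma line_point_shear:
  assumes kf: "kbasis f1 f2 f3" and eq: "Rspan v f1 f2 f3 = Rspan v e1 e2 e3"
    and su: "0 \<le> s" "0 \<le> u"
    and e1: "e1 = lincomb a b c f1 f2 f3" and a: "vunit a" and b: "b \<in> R"
    and c: "c \<in> R" "\<not> vunit c"
  shows "apartment_or_special v p (Rspan v e1 e2 e3) (Rspan v e1 (pmul s e2) (pmul s e3))
           (Rspan v f1 f2 (pmul u f3))"
proof -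
  have kb: "kbasis e1 f2 f3" by (rule kbasis_replace1[OF kf vunit_nonzero[OF a] e1])
  have L1: "Rspan v e1 f2 f3 = Rspan v e1 e2 e3" using Rspan_replace1[OF a b c(1) e1] eq by simp
  have L2: "Rspan v e1 (pmul s f2) (pmul s f3) = Rspan v e1 (pmul s e2) (pmul s e3)"
    by (rule line_lattice_transport[OF L1]) (use su in simp)
  have L3: "Rspan v (e1 + sm (- c) f3) f2 (pmul u f3) = Rspan v f1 f2 (pmul u f3)"
    by (rule Rspan_replace1[OF a b R_zero]) (simp add: e1 vec_eq_iff)
  have "\<not> vunit (- c)" using c(2) vunit_uminus[of "- c"] by auto
  then show ?thesis
    using shear_pair[OF kb _ _ _, where a=s and b=0 and s=s and u=u and c="- c"] c(1) L1 L2 L3 by simp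
qed

lemma line_point:
  assumes ke: "kbasis e1 e2 e3" and kf: "kbasis f1 f2 f3"
    and eq: "Rspan v f1 f2 f3 = Rspan v e1 e2 e3" and su: "0 \<le> s" "0 \<le> u"
  shows "apartment_or_special v p (Rspan v e1 e2 e3) (Rspan v e1 (pmul s e2) (pmul s e3))
           (Rspan v f1 f2 (pmul u f3))"
proof -
  obtain a b c where e1: "e1 = lincomb a b c f1 f2 f3" using kbasis_coords[OF kf] .
  note coords = lattice_vector_coords[OF ke kf eq[symmetric] e1]
  consider "vunit c" | "vunit a" "\<not> vunit c" | "vunit b" "\<not> vunit c" using coords(4) by blast
  then show ?thesis
  proof cases
    case 1
    then show ?thesis using line_point_unit[OF kf eq _ _ e1 1 coords(1,2)] su by simp
  next
    case 2
    show ?thesis by (rule line_point_shear[OF kf eq su e1 2(1) coords(2,3) 2(2)])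
  next
    case 3
    have "apartment_or_special v p (Rspan v e1 e2 e3) (Rspan v e1 (pmul s e2) (pmul s e3))
            (Rspan v f2 f1 (pmul u f3))"
      by (rule line_point_shear[OF kbasis_swap12[OF kf] _ su _ 3(1) coords(1,3) 3(2)])
        (use eq e1 in \<open>simp_all add: Rspan_swap12[of f2 f1 f3] lincomb_swap12\<close>)
    then show ?thesis by (simp add: Rspan_swap12[of f2 f1])
  qed
qed

section \<open>Two lattices of point type\<close>

text \<open>Point/point with a common vector e1 of both bases, where g (the other generator of the
  plane of L3) has a unit e3-coordinate: then e1, e2, g is a basis diagonalizing both lattices.\<close>
lemma point_point_unit:
  assumes ke: "kbasis e1 e2 e3" and eq: "Rspan v g e1 f3 = Rspan v e1 e2 e3"
    and su: "0 \<le> s" "0 \<le> u"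
    and g: "g = lincomb 0 B c e1 e2 e3" and B: "B \<in> R" and c: "vunit c"
  shows "apartment_or_special v p (Rspan v e1 e2 e3) (Rspan v e1 e2 (pmul s e3))
           (Rspan v g e1 (pmul u f3))"
proof -
  have kb: "kbasis e1 e2 g" by (rule kbasis_replace3[OF ke vunit_nonzero[OF c] g])
  have L1: "Rspan v e1 e2 g = Rspan v e1 e2 e3" by (rule Rspan_replace3[OF c R_zero B g])
  have L2: "Rspan v e1 e2 (pmul s g) = Rspan v e1 e2 (pmul s e3)"
    by (rule Rspan_replace3[OF c R_zero, where b="p powi s * B"])
      (use B su in \<open>auto simp: g vec_eq_iff algebra_simps\<close>)
  have "Rspan v g e1 e2 = Rspan v g e1 f3"
    using L1 eq Rspan_swap12[of g e1 e2] Rspan_swap23[of e1 g e2] by simp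
  then have "Rspan v g e1 (pmul u e2) = Rspan v g e1 (pmul u f3)"
    by (rule plane_lattice_transport) (use su in simp)
  then have L3: "Rspan v g e1 (pmul u f3) = Rspan v (pmul 0 e1) (pmul u e2) (pmul 0 g)"
    using Rspan_swap12[of g e1] Rspan_swap23[of e1 g] by simp
  show ?thesis
    by (rule apartmentI[OF kb L1[symmetric] _ L3, of _ 0 0 s]) (simp add: L2)
qed

text \<open>Point/point with a common vector e1, where g = B e2 + c e3 with B a unit and c a
  non-unit: normalizing g to e2 + (c/B) e3 gives the shear configuration with exponents
  (0, 0) in the basis e2, e1, e3.\<close>
lemma point_point_shear:
  assumes ke: "kbasis e1 e2 e3" and eq: "Rspan v g e1 f3 = Rspan v e1 e2 e3"
    and su: "0 \<le> s" "0 \<le> u"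
    and g: "g = lincomb 0 B c e1 e2 e3" and B: "vunit B" and c: "c \<in> R" "\<not> vunit c"
  shows "apartment_or_special v p (Rspan v e1 e2 e3) (Rspan v e1 e2 (pmul s e3))
           (Rspan v g e1 (pmul u f3))"
proof -
  define g' where "g' = e2 + sm (c / B) e3"
  have normalize: "Rspan v g' e1 h = Rspan v g e1 h" for h
    by (rule Rspan_replace1[OF vunit_inverse[OF B] R_zero R_zero])
      (use vunit_nonzero[OF B] in \<open>simp add: g g'_def vec_eq_iff field_simps\<close>)
  have cB: "c / B \<in> R" "\<not> vunit (c / B)"
    using c B by (simp_all add: R_divide_vunit nonunit_divide_vunit)
  have "Rspan v g' e1 e3 = Rspan v e2 e1 e3"
    by (rule Rspan_replace1[OF vunit_one R_zero cB(1)]) (simp add: g'_def vec_eq_iff)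
  then have "Rspan v g' e1 f3 = Rspan v g' e1 e3"
    using eq normalize Rspan_swap12[of e1 e2 e3] by simp
  then have L3: "Rspan v g' e1 (pmul u f3) = Rspan v g' e1 (pmul u e3)"
    by (rule plane_lattice_transport) (use su in simp)
  have "apartment_or_special v p (Rspan v e1 e2 e3) (Rspan v e1 e2 (pmul s e3))
          (Rspan v g' e1 (pmul u e3))"
    using shear_pair[OF kbasis_swap12[OF ke] _ cB, where a=0 and b=0 and s=s and u=u]
    by (simp add: g'_def Rspan_swap12[of e2 e1])
  then show ?thesis unfolding normalize[symmetric] L3 .
qed

text \<open>Subtracting the e1-component from f1 leaves
  g = B e2 + c e3, which is primitive, so B or c is a unit.\<close>
lemma point_point_shared:
  assumes ke: "kbasis e1 e2 e3" and kf: "kbasis f1 e1 f3"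
    and eq: "Rspan v f1 e1 f3 = Rspan v e1 e2 e3" and su: "0 \<le> s" "0 \<le> u"
  shows "apartment_or_special v p (Rspan v e1 e2 e3) (Rspan v e1 e2 (pmul s e3))
           (Rspan v f1 e1 (pmul u f3))"
proof -
  obtain A B c where f1: "f1 = lincomb A B c e1 e2 e3" using kbasis_coords[OF ke] .
  have A: "A \<in> R" using lattice_vector_coords(1)[OF kf ke eq f1] .
  define g where "g = lincomb 1 (- A) 0 f1 e1 f3"
  have kg: "kbasis g e1 f3" by (rule kbasis_replace1[OF kf one_neq_zero g_def])
  have reduce: "Rspan v g e1 h = Rspan v f1 e1 h" for h
    by (rule Rspan_replace1[OF vunit_one, where b="- A" and c=0]) (simp_all add: A g_def vec_eq_iff)
  have eqg: "Rspan v g e1 f3 = Rspan v e1 e2 e3" using eq reduce by simp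
  have g: "g = lincomb 0 B c e1 e2 e3" by (simp add: g_def f1 vec_eq_iff)
  note coords = lattice_vector_coords[OF kg ke eqg g]
  have "apartment_or_special v p (Rspan v e1 e2 e3) (Rspan v e1 e2 (pmul s e3))
          (Rspan v g e1 (pmul u f3))"
  proof (cases "vunit c")
    case True
    then show ?thesis using point_point_unit[OF ke eqg _ _ g coords(2)] su by simp
  next
    case False
    then have "vunit B" using coords(4) by (auto simp: vunit_def)
    then show ?thesis using point_point_shear[OF ke eqg su g _ coords(3) False] by simp
  qed
  then show ?thesis by (simp add: reduce)
qed

text \<open>In the basis f, a combination of f1 and f2 with vanishing e3-coordinate can be chosen
  as a new second basis vector: subtract (c2/c1) f1 from f2 when v(c1) <= v(c2).\<close>
lemma eliminate_e3_coordinate: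
  assumes kf: "kbasis f1 f2 f3"
    and f1: "f1 = lincomb a1 b1 c1 e1 e2 e3" and f2: "f2 = lincomb a2 b2 c2 e1 e2 e3"
    and W: "c2 = 0 \<or> (c1 \<noteq> 0 \<and> v c1 \<le> v c2)"
  obtains x \<alpha> \<beta> where "kbasis f1 x f3" "\<forall>h. Rspan v f1 x h = Rspan v f1 f2 h"
    "x = lincomb \<alpha> \<beta> 0 e1 e2 e3"
proof -
  define k where "k = c2 / c1"
  have k: "k \<in> R" unfolding k_def using W by (intro R_divide) auto
  define x where "x = lincomb (- k) 1 0 f1 f2 f3"
  have "kbasis f1 x f3" by (rule kbasis_replace2[OF kf one_neq_zero x_def])
  moreover have "\<forall>h. Rspan v f1 x h = Rspan v f1 f2 h"
    by (intro allI Rspan_replace2[OF vunit_one, where a="- k" and c=0]) (simp_all add: k x_def vec_eq_iff)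
  moreover have "c2 - k * c1 = 0" using W by (auto simp: k_def)
  then have "x = lincomb (a2 - k * a1) (b2 - k * b1) 0 e1 e2 e3"
    by (simp add: x_def f1 f2 vec_eq_iff algebra_simps)
  ultimately show ?thesis by (rule that)
qed

lemma common_plane_vector:
  assumes ke: "kbasis e1 e2 e3" and kf: "kbasis f1 f2 f3"
  obtains y x \<alpha> \<beta> where "kbasis y x f3" "\<forall>h. Rspan v y x h = Rspan v f1 f2 h"
    "x = lincomb \<alpha> \<beta> 0 e1 e2 e3"
proof -
  obtain a1 b1 c1 where f1: "f1 = lincomb a1 b1 c1 e1 e2 e3" using kbasis_coords[OF ke] .
  obtain a2 b2 c2 where f2: "f2 = lincomb a2 b2 c2 e1 e2 e3" using kbasis_coords[OF ke] .
  show ?thesis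
  proof (cases "c2 = 0 \<or> (c1 \<noteq> 0 \<and> v c1 \<le> v c2)")
    case True
    obtain x \<alpha> \<beta> where "kbasis f1 x f3" "\<forall>h. Rspan v f1 x h = Rspan v f1 f2 h"
      "x = lincomb \<alpha> \<beta> 0 e1 e2 e3"
      using eliminate_e3_coordinate[OF kf f1 f2 True] .
    then show ?thesis by (rule that)
  next
    case False
    then have W: "c1 = 0 \<or> (c2 \<noteq> 0 \<and> v c2 \<le> v c1)" by auto
    obtain x \<alpha> \<beta> where kx: "kbasis f2 x f3" and Lx: "\<forall>h. Rspan v f2 x h = Rspan v f2 f1 h"
      and x: "x = lincomb \<alpha> \<beta> 0 e1 e2 e3"
      using eliminate_e3_coordinate[OF kbasis_swap12[OF kf] f2 f1 W] .
    have "\<forall>h. Rspan v f2 x h = Rspan v f1 f2 h"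
      using Lx Rspan_swap12[of f2 f1] by simp
    then show ?thesis by (rule that[OF kx _ x])
  qed
qed

lemma plane_exchange:
  assumes ke: "kbasis e1 e2 e3" and x: "x = lincomb \<alpha> \<beta> 0 e1 e2 e3"
    and R: "\<alpha> \<in> R" "\<beta> \<in> R" and prim: "vunit \<alpha> \<or> vunit \<beta>"
  obtains z where "kbasis x z e3" "\<forall>h. Rspan v x z h = Rspan v e1 e2 h"
proof (cases "vunit \<alpha>")
  case True
  have "kbasis x e2 e3" by (rule kbasis_replace1[OF ke vunit_nonzero[OF True] x])
  moreover have "\<forall>h. Rspan v x e2 h = Rspan v e1 e2 h"
    by (intro allI Rspan_replace1[OF True R(2) R_zero]) (simp add: x vec_eq_iff)
  ultimately show ?thesis by (rule that)
next
  case False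
  with prim have unit: "vunit \<beta>" by simp
  have "kbasis e1 x e3" by (rule kbasis_replace2[OF ke vunit_nonzero[OF unit] x])
  moreover have "Rspan v e1 x h = Rspan v e1 e2 h" for h
    by (rule Rspan_replace2[OF unit R(1) R_zero]) (simp add: x vec_eq_iff)
  ultimately have "kbasis x e1 e3" "\<forall>h. Rspan v x e1 h = Rspan v e1 e2 h"
    using kbasis_swap12 Rspan_swap12[of x e1] by simp_all
  then show ?thesis by (rule that)
qed

text \<open>Case point/point: L2 = R{e1, e2, pi^s e3} and L3 = R{f1, f2, pi^u f3}.  Rewrite both
  planes through a common primitive vector and apply the shared-vector case.\<close>
lemma point_point:
  assumes ke: "kbasis e1 e2 e3" and kf: "kbasis f1 f2 f3"
    and eq: "Rspan v f1 f2 f3 = Rspan v e1 e2 e3" and su: "0 \<le> s" "0 \<le> u"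
  shows "apartment_or_special v p (Rspan v e1 e2 e3) (Rspan v e1 e2 (pmul s e3))
           (Rspan v f1 f2 (pmul u f3))"
proof -
  obtain y x \<alpha> \<beta> where ky: "kbasis y x f3" and Ly: "\<forall>h. Rspan v y x h = Rspan v f1 f2 h"
    and x: "x = lincomb \<alpha> \<beta> 0 e1 e2 e3"
    using common_plane_vector[OF ke kf] .
  have "Rspan v x y f3 = Rspan v e1 e2 e3" using Ly eq Rspan_swap12[of x y] by simp
  note coords = lattice_vector_coords[OF kbasis_swap12[OF ky] ke this x]
  have prim: "vunit \<alpha> \<or> vunit \<beta>" using coords(4) by (auto simp: vunit_def)
  obtain z where kz: "kbasis x z e3" and Lz: "\<forall>h. Rspan v x z h = Rspan v e1 e2 h"
    using plane_exchange[OF ke x coords(1,2) prim] .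
  have "apartment_or_special v p (Rspan v x z e3) (Rspan v x z (pmul s e3)) (Rspan v y x (pmul u f3))"
    by (rule point_point_shared[OF kz ky _ su]) (simp add: Ly Lz eq)
  then show ?thesis by (simp add: Ly Lz)
qed

section \<open>Normal form of an unbent line and the main theorem\<close>

lemma homothetic_normalize:
  "homothetic (Rspan v e1 (pmul (m2 - m1) e2) (pmul (m3 - m1) e3)) (Rspan v (pmul m1 e1) (pmul m2 e2) (pmul m3 e3))"
proof -
  have "p powi m1 * p powi (m2 - m1) = p powi m2" "p powi m1 * p powi (m3 - m1) = p powi m3"
    by (simp_all add: power_int_add[symmetric])
  then show ?thesis unfolding homothetic_def
    by (intro exI[of _ "p powi m1"]) (simp add: sm_image_Rspan sm_sm)
qed

lemma unbent_normal_form: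
  assumes "unbent v p L1 L2" and "\<not> homothetic L1 L2"
  obtains (line) e1 e2 e3 s where "kbasis e1 e2 e3" "L1 = Rspan v e1 e2 e3" "0 < s"
      "homothetic (Rspan v e1 (pmul s e2) (pmul s e3)) L2"
    | (point) e1 e2 e3 s where "kbasis e1 e2 e3" "L1 = Rspan v e1 e2 e3" "0 < s"
      "homothetic (Rspan v e1 e2 (pmul s e3)) L2"
proof -
  obtain e1 e2 e3 m1 m2 m3 where kb: "kbasis e1 e2 e3" and L1: "L1 = Rspan v e1 e2 e3"
    and L2: "L2 = Rspan v (pmul m1 e1) (pmul m2 e2) (pmul m3 e3)"
    and m: "m1 \<le> m2" "m2 \<le> m3" "\<not> (m1 < m2 \<and> m2 < m3)"
    using assms(1) unfolding unbent_def by blast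
  have h: "homothetic (Rspan v e1 (pmul (m2 - m1) e2) (pmul (m3 - m1) e3)) L2"
    unfolding L2 by (rule homothetic_normalize)
  consider "m1 = m2" "m2 = m3" | "m1 = m2" "m2 < m3" | "m1 < m2" "m2 = m3" using m by linarith
  then show ?thesis
  proof cases
    case 1
    with h L1 assms(2) show ?thesis by simp
  next
    case 2
    with h show ?thesis using point[OF kb L1, of "m3 - m1"] by simp
  next
    case 3
    with h show ?thesis using line[OF kb L1, of "m2 - m1"] by simp
  qed
qed

lemma unbent_lines_apartment_or_special:
  assumes "unbent v p L1 L2" "\<not> homothetic L1 L2" "unbent v p L1 L3" "\<not> homothetic L1 L3"
  shows "apartment_or_special v p L1 L2 L3"
  using assms(1,2)
proof (cases rule: unbent_normal_form)
  case E: (line e1 e2 e3 s)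
  from assms(3,4) show ?thesis
  proof (cases rule: unbent_normal_form)
    case F: (line f1 f2 f3 u)
    have "apartment_or_special v p L1 (Rspan v e1 (pmul s e2) (pmul s e3)) (Rspan v f1 (pmul u f2) (pmul u f3))"
      using line_line[OF E(1) F(1) _ less_imp_le[OF E(3)] less_imp_le[OF F(3)]] E(2) F(2) by simp
    from apartment_or_special_homothetic[OF this E(4) F(4)] show ?thesis .
  next
    case F: (point f1 f2 f3 u)
    have "apartment_or_special v p L1 (Rspan v e1 (pmul s e2) (pmul s e3)) (Rspan v f1 f2 (pmul u f3))"
      using line_point[OF E(1) F(1) _ less_imp_le[OF E(3)] less_imp_le[OF F(3)]] E(2) F(2) by simp
    from apartment_or_special_homothetic[OF this E(4) F(4)] show ?thesis .
  qed
next
  case E: (point e1 e2 e3 s)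
  from assms(3,4) show ?thesis
  proof (cases rule: unbent_normal_form)
    case F: (line f1 f2 f3 u)
    have "apartment_or_special v p L1 (Rspan v f1 (pmul u f2) (pmul u f3)) (Rspan v e1 e2 (pmul s e3))"
      using line_point[OF F(1) E(1) _ less_imp_le[OF F(3)] less_imp_le[OF E(3)]] E(2) F(2) by simp
    from apartment_or_special_homothetic[OF apartment_or_special_swap[OF this] E(4) F(4)]
    show ?thesis .
  next
    case F: (point f1 f2 f3 u)
    have "apartment_or_special v p L1 (Rspan v e1 e2 (pmul s e3)) (Rspan v f1 f2 (pmul u f3))"
      using point_point[OF E(1) F(1) _ less_imp_le[OF E(3)] less_imp_le[OF F(3)]] E(2) F(2) by simp
    from apartment_or_special_homothetic[OF this E(4) F(4)] show ?thesis .
  qed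
qed

end

theorem mainTheorem18:
  fixes v :: "'a::field \<Rightarrow> int" and \<pi> :: 'a
    and L1 L2 L3 :: "('a^3) set"
  assumes "discrete_valuation v" and "\<pi> \<noteq> 0" and "v \<pi> = 1"
    and "is_lattice v L1" and "is_lattice v L2" and "is_lattice v L3"
    and "\<not> homothetic L1 L2" and "\<not> homothetic L1 L3" and "\<not> homothetic L2 L3"
    and "unbent v \<pi> L1 L2" and "unbent v \<pi> L1 L3"
  shows "in_apartment v \<pi> {L1, L2, L3} \<or>
    (\<exists>e1 e2 e3 t s u. kbasis e1 e2 e3 \<and> L1 = Rspan v e1 e2 e3 \<and>
       0 < t \<and> t < s \<and> t < u \<and>
       (\<exists>A B. ((homothetic L2 A \<and> homothetic L3 B) \<or> (homothetic L3 A \<and> homothetic L2 B)) \<and>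
         ((A = Rspan v e1 (sm (\<pi> powi s) e2) (sm (\<pi> powi s) e3) \<and>
           B = Rspan v (e1 + sm (\<pi> powi t) e2) (sm (\<pi> powi u) e2) (sm (\<pi> powi u) e3)) \<or>
          (A = Rspan v e1 (sm (\<pi> powi s) e2) (sm (\<pi> powi s) e3) \<and>
           B = Rspan v (e1 + sm (\<pi> powi t) e3) e2 (sm (\<pi> powi u) e3)) \<or>
          (A = Rspan v e1 e2 (sm (\<pi> powi s) e3) \<and>
           B = Rspan v (e1 + sm (\<pi> powi t) e3) e2 (sm (\<pi> powi u) e3)))))"
proof -
  interpret uniformized_valuation v \<pi>
    using assms(1-3) by unfold_locales
  have "apartment_or_special v \<pi> L1 L2 L3"
    using unbent_lines_apartment_or_special assms(7,8,10,11) by blast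
  then show ?thesis unfolding apartment_or_special_def special_position_def .
qed

end
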